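(* Let $\mathbf{A} \in \mathbb{R}^{n\times n}$ be invertible and let $\hat{\mathbf{A}}$ be a random $n\times n$ real matrix, invertible almost surely, such that $\mathbb{E}[\hat{\mathbf{A}}^{-2}]$ exists. Suppose the distribution of $\hat{\mathbf{A}}$ is symmetric about its mean (i.e. $\hat{\mathbf{A}} - \mathbf{A}$ and $\mathbf{A} - \hat{\mathbf{A}}$ have the same distribution) and $\mathbb{E}[\hat{\mathbf{A}}] = \mathbf{A}$. Let $\mathbf{b} \in \mathbb{R}^n$ be a random vector, independent of $\hat{\mathbf{A}}$, with nonsingular auto-correlation matrix $\mathbf{R} = \mathbb{E}[\mathbf{b}\mathbf{b}^T]$. For $\beta \in \mathbb{R}$ define the augmented inverse operator $$\tilde{\mathbf{A}}_\beta^{-1} = \hat{\mathbf{A}}^{-1} - \beta\hat{\mathbf{A}}^{-1}\mathbf{R}^{-1}$$ and the semi-Bayesian residual error $$E(\beta) = \mathbb{E}_{\mathbf{b}}\mathbb{E}_{\hat{\mathbf{A}}}\big[\|\tilde{\mathbf{A}}_\beta^{-1}\mathbf{b} - \mathbf{A}^{-1}\mathbf{b}\|^2_{\mathbf{A}^T\mathbf{A}}\big] = \mathbb{E}_{\hat{\mathbf{A}}}\big[\|\tilde{\mathbf{A}}_\beta^{-1} - \mathbf{A}^{-1}\|^2_{\mathbf{A}^T\mathbf{A},\mathbf{R}}\big].$$ Then the optimal augmentation factor $\beta^* = \arg\min_\beta E(\beta)$ is nonnegative.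
   Context: For a vector $\mathbf{v}$ and symmetric positive definite $\mathbf{B}$, $\|\mathbf{v}\|_{\mathbf{B}}^2 = \mathbf{v}^T\mathbf{B}\mathbf{v}$. For matrices, $\langle \mathbf{M}, \mathbf{N}\rangle_{\mathbf{B},\mathbf{R}} = \mathrm{tr}(\mathbf{R}^{1/2}\mathbf{M}^T\mathbf{B}\mathbf{N}\mathbf{R}^{1/2})$ and $\|\mathbf{M}\|_{\mathbf{B},\mathbf{R}}^2 = \langle \mathbf{M},\mathbf{M}\rangle_{\mathbf{B},\mathbf{R}}$. The minimizer of the quadratic $E(\beta)$ is $\beta^* = \mathbb{E}\langle \hat{\mathbf{K}}, \hat{\mathbf{A}}^{-1} - \mathbf{A}^{-1}\rangle_{\mathbf{A}^T\mathbf{A},\mathbf{R}} / \mathbb{E}\|\hat{\mathbf{K}}\|^2_{\mathbf{A}^T\mathbf{A},\mathbf{R}}$ with $\hat{\mathbf{K}} = \hat{\mathbf{A}}^{-1}\mathbf{R}^{-1}$. *)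

theory Defs
  imports "HOL-Probability.Probability"
begin

definition wnorm2 :: "real^'n^'n \<Rightarrow> real^'n \<Rightarrow> real" where
  "wnorm2 B v = v \<bullet> (B *v v)"

definition outer :: "real^'n \<Rightarrow> real^'n^'n" where
  "outer v = (\<chi> i j. v $ i * v $ j)"

definition aug_inv :: "real \<Rightarrow> real^'n^'n \<Rightarrow> real^'n^'n \<Rightarrow> real^'n^'n" where
  "aug_inv \<beta> R Ahat = matrix_inv Ahat - \<beta> *\<^sub>R (matrix_inv Ahat ** matrix_inv R)"

definition resid_err ::
  "'a measure \<Rightarrow> real^'n^'n \<Rightarrow> ('a \<Rightarrow> real^'n^'n) \<Rightarrow> ('a \<Rightarrow> real^'n) \<Rightarrow> real^'n^'n \<Rightarrow> real \<Rightarrow> real" where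
  "resid_err M A Ahat b R \<beta> =
     (\<integral>\<omega>. wnorm2 (transpose A ** A) (aug_inv \<beta> R (Ahat \<omega>) *v b \<omega> - matrix_inv A *v b \<omega>) \<partial>M)"

end

theory Submission
  imports Defs
begin

text \<open>
  Expanding the square, the residual error is a quadratic E(\<beta>) = E(0) - 2\<beta>c + \<beta>^2 d.
  Its leading coefficient d = E |A K b|^2, with K = Ahat^-1 R^-1, is positive because R is
  invertible, so the unique minimiser is c/d. Independence of Ahat and b turns c into E h(Ahat)
  with h(X) = \<langle>A X^-1 - I, A X^-1\<rangle> (Frobenius inner product), the factor R^-1 of K cancelling
  against E(b b^T) = R. Symmetry of the distribution means that Ahat and 2A - Ahat have the same
  law, so 2c = E(h(Ahat) + h(2A - Ahat)). Finally, if X + Y = 2A, then M = A X^-1 and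
  N = A Y^-1 satisfy M + N = 2MN, hence h(X) + h(Y) = |M - N^T|^2 \<ge> 0, and c \<ge> 0.
\<close>

lemma matrix_inv_right:
  fixes X :: "'a::semiring_1^'n^'n"
  assumes "invertible X"
  shows "X ** matrix_inv X = mat 1"
  using someI_ex[OF assms[unfolded invertible_def]] unfolding matrix_inv_def by auto

lemma matrix_inv_left:
  fixes X :: "'a::semiring_1^'n^'n"
  assumes "invertible X"
  shows "matrix_inv X ** X = mat 1"
  using someI_ex[OF assms[unfolded invertible_def]] unfolding matrix_inv_def by auto

lemma invertible_matrix_inv:
  fixes X :: "'a::semiring_1^'n^'n"
  assumes "invertible X"
  shows "invertible (matrix_inv X)"
  using matrix_inv_left[OF assms] matrix_inv_right[OF assms] unfolding invertible_def by blast

lemma not_invertible_zero: "\<not> invertible (0::'a::field^'n^'n)"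
proof -
  have "row undefined (0::'a^'n^'n) = 0"
    by (simp add: row_def vec_eq_iff)
  then show ?thesis
    by (simp add: invertible_det_nz det_zero_row(2))
qed

lemma matrix_inv_not_invertible:
  fixes X :: "'a::semiring_1^'n^'n"
  assumes "\<not> invertible X" and "\<not> invertible Y"
  shows "matrix_inv X = matrix_inv Y"
  using assms unfolding matrix_inv_def invertible_def by metis

lemma matrix_inv_cramer:
  fixes X :: "real^'n^'n"
  assumes "invertible X"
  shows "matrix_inv X =
    (\<chi> i j. det (\<chi> r c. if c = i then (if r = j then 1 else 0) else X $ r $ c) / det X)"
proof -
  have "matrix_inv X $ i $ j =
      det (\<chi> r c. if c = i then (if r = j then 1 else 0) else X $ r $ c) / det X" for i j
  proof -
    have "X *v (\<chi> k. matrix_inv X $ k $ j) = (\<chi> r. if r = j then 1 else 0)"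
      using arg_cong[where f = "\<lambda>Y. \<chi> r. Y $ r $ j", OF matrix_inv_right[OF assms]]
      by (simp add: vec_eq_iff matrix_vector_mult_def matrix_matrix_mult_def mat_def)
    then have "(\<chi> k. matrix_inv X $ k $ j)
        = (\<chi> k. det (\<chi> r c. if c = k then (\<chi> r. if r = j then 1 else 0) $ r else X $ r $ c) / det X)"
      using cramer[of X] assms invertible_det_nz by blast
    from arg_cong[where f = "\<lambda>v. v $ i", OF this] show ?thesis by (simp only: vec_lambda_beta)
  qed
  then show ?thesis by (simp add: vec_eq_iff)
qed

lemma matrix_add_rdistrib: "((B::'a::semiring_1^'n^'m) + C) ** A = B ** A + C ** A"
  by (vector matrix_matrix_mult_def sum.distrib[symmetric] field_simps)

lemma inner_matrix_eq_trace: "(X::real^'m^'n) \<bullet> Y = trace (X ** transpose Y)"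
  by (simp add: inner_vec_def trace_def matrix_matrix_mult_def transpose_def)

lemma inner_mat_1_right: "(X::real^'n^'n) \<bullet> mat 1 = trace X"
  by (simp add: inner_matrix_eq_trace)

lemma norm_transpose: "norm (transpose (X::real^'m^'n)) = norm X"
proof -
  have "transpose X \<bullet> transpose X = X \<bullet> X"
    unfolding inner_vec_def transpose_def by (simp add: sum.swap[of _ "UNIV::'m set"])
  then show ?thesis by (simp add: norm_eq_sqrt_inner)
qed

text \<open>The norm on \<^typ>\<open>real^'m^'n\<close> is the Frobenius norm.\<close>

lemma norm_matrix_vector_mult_le: "norm ((X::real^'m^'n) *v v) \<le> norm X * norm v"
proof -
  have row: "(X *v v) $ i = X $ i \<bullet> v" for i
    by (simp add: matrix_vector_mult_def inner_vec_def)
  have "(norm (X *v v))\<^sup>2 = (\<Sum>i\<in>UNIV. (X $ i \<bullet> v)\<^sup>2)"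
    unfolding power2_norm_eq_inner by (simp add: inner_vec_def row power2_eq_square)
  also have "\<dots> \<le> (\<Sum>i\<in>UNIV. (norm (X $ i))\<^sup>2 * (norm v)\<^sup>2)"
    by (intro sum_mono)
      (metis Cauchy_Schwarz_ineq2 abs_ge_zero power_mono power_mult_distrib power2_abs)
  also have "\<dots> = (norm X * norm v)\<^sup>2"
    by (simp add: power_mult_distrib sum_distrib_right power2_norm_eq_inner inner_vec_def[of X])
  finally show ?thesis by (simp add: power2_le_iff_abs_le)
qed

lemma norm_matrix_mult_le: "norm ((X::real^'m^'n) ** Y) \<le> norm X * norm Y"
proof -
  have row: "(X ** Y) $ i = transpose Y *v X $ i" for i
    by (simp add: vec_eq_iff matrix_matrix_mult_def matrix_vector_mult_def transpose_def mult.commute)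
  have "(norm (X ** Y))\<^sup>2 = (\<Sum>i\<in>UNIV. (norm ((X ** Y) $ i))\<^sup>2)"
    unfolding power2_norm_eq_inner by (simp add: inner_vec_def)
  also have "\<dots> \<le> (\<Sum>i\<in>UNIV. (norm (X $ i))\<^sup>2 * (norm Y)\<^sup>2)"
    unfolding row
    by (intro sum_mono) (metis norm_matrix_vector_mult_le norm_transpose norm_ge_zero power_mono
        power_mult_distrib mult.commute)
  also have "\<dots> = (norm X * norm Y)\<^sup>2"
    by (simp add: power_mult_distrib sum_distrib_right power2_norm_eq_inner inner_vec_def[of X])
  finally show ?thesis by (simp add: power2_le_iff_abs_le)
qed

lemma inner_outer: "(P::real^'n^'n) \<bullet> outer v = v \<bullet> (P *v v)"
  by (simp add: inner_vec_def outer_def matrix_vector_mult_def sum_distrib_left mult_ac)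

lemma inner_matrix_vector_mult_eq_outer:
  "((F::real^'n^'m) *v v) \<bullet> (G *v v) = (transpose F ** G) \<bullet> outer v"
  by (metis inner_outer dot_lmul_matrix inner_commute matrix_vector_mul_assoc transpose_matrix_vector)

lemma inner_transpose_mult_symmetric:
  fixes F N R :: "real^'n^'n"
  assumes "invertible R" and "transpose R = R"
  shows "(transpose F ** (N ** matrix_inv R)) \<bullet> R = F \<bullet> N"
proof -
  have "(transpose F ** (N ** matrix_inv R)) \<bullet> R = trace (transpose F ** N ** (matrix_inv R ** R))"
    by (simp add: inner_matrix_eq_trace assms(2) matrix_mul_assoc)
  also have "\<dots> = trace (N ** transpose F)"
    by (simp add: matrix_inv_left[OF assms(1)] trace_mul_sym[of "transpose F"])
  finally show ?thesis by (metis inner_commute inner_matrix_eq_trace)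
qed

lemma wnorm2_transpose_mult_self: "wnorm2 (transpose A ** A) w = (A *v w) \<bullet> (A *v w)"
proof -
  have "(transpose A ** A) *v w = (A *v w) v* A"
    by (simp flip: matrix_vector_mul_assoc)
  then show ?thesis
    unfolding wnorm2_def by (metis inner_commute dot_lmul_matrix)
qed

lemma wnorm2_aug_inv_expand:
  fixes A R X :: "real^'n^'n" and v :: "real^'n"
  assumes "invertible A"
  defines "u \<equiv> (A ** matrix_inv X - mat 1) *v v" and "w \<equiv> (A ** matrix_inv X ** matrix_inv R) *v v"
  shows "wnorm2 (transpose A ** A) (aug_inv \<beta> R X *v v - matrix_inv A *v v)
    = u \<bullet> u - 2 * \<beta> * (u \<bullet> w) + \<beta>\<^sup>2 * (w \<bullet> w)"
proof -
  have Av: "A *v (aug_inv \<beta> R X *v v - matrix_inv A *v v) = u - \<beta> *\<^sub>R w"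
    unfolding aug_inv_def u_def w_def
    by (simp add: algebra_simps matrix_vector_mul_assoc matrix_mul_assoc matrix_inv_right[OF assms(1)]
        flip: scaleR_matrix_vector_assoc)
  show ?thesis
    unfolding wnorm2_transpose_mult_self Av
    by (simp add: inner_diff_left inner_diff_right inner_commute[of w u] power2_eq_square algebra_simps)
qed

definition cross_term :: "real^'n^'n \<Rightarrow> real^'n^'n \<Rightarrow> real" where
  "cross_term A X = (A ** matrix_inv X - mat 1) \<bullet> (A ** matrix_inv X)"

lemma cross_term_reflect_nonneg:
  fixes A X Y :: "real^'n^'n"
  assumes A: "invertible A" and X: "invertible X" and Y: "invertible Y" and XY: "X + Y = 2 *\<^sub>R A"
  shows "0 \<le> cross_term A X + cross_term A Y"
proof -
  define M where "M = A ** matrix_inv X"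
  define N where "N = A ** matrix_inv Y"
  have "M ** (X ** matrix_inv A) ** N = N"
    unfolding M_def
    by (metis A X matrix_inv_left matrix_inv_right matrix_mul_assoc matrix_mul_lid)
  moreover have "M ** (Y ** matrix_inv A) ** N = M"
    unfolding N_def
    by (metis A Y matrix_inv_left matrix_inv_right matrix_mul_assoc matrix_mul_rid)
  ultimately have "M ** ((X + Y) ** matrix_inv A) ** N = M + N"
    by (simp add: matrix_add_rdistrib matrix_add_ldistrib add.commute)
  then have MN: "M + N = 2 *\<^sub>R (M ** N)"
    unfolding XY by (simp add: matrix_inv_right[OF A] matrix_scalar_ac flip: scalar_matrix_assoc)
  have "cross_term A X + cross_term A Y = M \<bullet> M + N \<bullet> N - trace (M + N)"
    unfolding cross_term_def M_def[symmetric] N_def[symmetric]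
    by (simp add: inner_diff_left inner_commute[of "mat 1"] inner_mat_1_right trace_add)
  also have "\<dots> = M \<bullet> M + transpose N \<bullet> transpose N - 2 * (M \<bullet> transpose N)"
  proof -
    have "trace (M + N) = 2 * (M \<bullet> transpose N)"
      by (simp add: MN inner_matrix_eq_trace trace_def sum_distrib_left)
    moreover have "N \<bullet> N = transpose N \<bullet> transpose N"
      by (metis norm_transpose power2_norm_eq_inner)
    ultimately show ?thesis by simp
  qed
  also have "\<dots> = (norm (M - transpose N))\<^sup>2"
    by (simp add: power2_norm_eq_inner inner_diff_left inner_diff_right inner_commute)
  finally show ?thesis by simp
qed

lemma quadratic_minimizers_nonneg:
  fixes f :: "real \<Rightarrow> real"
  assumes f: "\<And>\<beta>. f \<beta> = a - 2 * \<beta> * c + \<beta>\<^sup>2 * d" and "0 < d" and "0 \<le> c"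
  shows "\<exists>\<beta>s. (\<forall>\<beta>. f \<beta>s \<le> f \<beta>) \<and> (\<forall>\<beta>s'. (\<forall>\<beta>. f \<beta>s' \<le> f \<beta>) \<longrightarrow> 0 \<le> \<beta>s')"
proof (intro exI conjI allI impI)
  show "f (c / d) \<le> f \<beta>" for \<beta>
  proof -
    have "f \<beta> - f (c / d) = d * (\<beta> - c / d)\<^sup>2"
      using \<open>0 < d\<close> by (simp add: f field_simps power2_eq_square)
    moreover have "0 \<le> d * (\<beta> - c / d)\<^sup>2"
      using \<open>0 < d\<close> by simp
    ultimately show ?thesis by linarith
  qed
  show "0 \<le> \<beta>s" if "\<forall>\<beta>. f \<beta>s \<le> f \<beta>" for \<beta>s
  proof (rule ccontr)
    assume "\<not> 0 \<le> \<beta>s"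
    moreover have "\<beta>s * d < 0"
      using \<open>\<not> 0 \<le> \<beta>s\<close> \<open>0 < d\<close> by (simp add: mult_neg_pos)
    ultimately have "0 < \<beta>s * (\<beta>s * d - 2 * c)"
      using \<open>0 \<le> c\<close> by (intro mult_neg_neg) auto
    moreover have "f \<beta>s \<le> f 0" using that by blast
    ultimately show False by (simp add: f power2_eq_square algebra_simps)
  qed
qed

lemma continuous_on_matrix_mult [continuous_intros]:
  fixes f :: "'a::topological_space \<Rightarrow> real^'m^'n" and g :: "'a \<Rightarrow> real^'p^'m"
  assumes "continuous_on S f" "continuous_on S g"
  shows "continuous_on S (\<lambda>x. f x ** g x)"
  unfolding matrix_matrix_mult_def by (intro continuous_intros assms)

lemma continuous_on_transpose [continuous_intros]:
  fixes f :: "'a::topological_space \<Rightarrow> real^'m^'n"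
  assumes "continuous_on S f"
  shows "continuous_on S (\<lambda>x. transpose (f x))"
  unfolding transpose_def by (intro continuous_intros assms)

lemma continuous_on_det [continuous_intros]:
  fixes f :: "'a::topological_space \<Rightarrow> real^'n^'n"
  assumes "continuous_on S f"
  shows "continuous_on S (\<lambda>x. det (f x))"
  unfolding det_def by (intro continuous_intros assms)

lemma continuous_on_if_const [continuous_intros]:
  "continuous_on S f \<Longrightarrow> continuous_on S g \<Longrightarrow> continuous_on S (\<lambda>x. if P then f x else g x)"
  by (cases P) auto

lemma open_invertible: "open {X::real^'n^'n. invertible X}"
proof -
  have "{X::real^'n^'n. invertible X} = {X. det X \<noteq> 0}"
    by (simp add: invertible_det_nz)
  then show ?thesis
    by (simp add: open_Collect_neq continuous_intros)
qed

lemma borel_measurable_matrix_inv [measurable]: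
  "(matrix_inv :: real^'n^'n \<Rightarrow> real^'n^'n) \<in> borel_measurable borel"
proof -
  have "matrix_inv = (\<lambda>X::real^'n^'n. if X \<in> {X. invertible X}
      then (\<chi> i j. det (\<chi> r c. if c = i then (if r = j then 1 else 0) else X $ r $ c) / det X)
      else matrix_inv (0::real^'n^'n))"
    by (auto simp: fun_eq_iff matrix_inv_cramer
        intro: matrix_inv_not_invertible[OF _ not_invertible_zero])
  also have "\<dots> \<in> borel_measurable borel"
    using open_invertible
    by (intro borel_measurable_continuous_on_if borel_open continuous_intros)
      (auto simp: invertible_det_nz)
  finally show ?thesis .
qed

lemma borel_measurable_outer [measurable]:
  "(outer :: real^'n \<Rightarrow> real^'n^'n) \<in> borel_measurable borel"
  unfolding outer_def by (intro borel_measurable_continuous_onI continuous_intros)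

lemma borel_measurable_transpose_mult:
  fixes F G :: "'a \<Rightarrow> real^'n^'n"
  assumes "F \<in> borel_measurable M" "G \<in> borel_measurable M"
  shows "(\<lambda>\<omega>. transpose (F \<omega>) ** G \<omega>) \<in> borel_measurable M"
  using borel_measurable_continuous_on[where f = "\<lambda>p. transpose (fst p) ** snd p",
      OF _ borel_measurable_Pair[OF assms]]
  by (simp add: continuous_intros)

lemma integrable_transpose_mult:
  fixes F G :: "'a \<Rightarrow> real^'n^'n"
  assumes [measurable]: "F \<in> borel_measurable M" "G \<in> borel_measurable M"
    and F_sq: "integrable M (\<lambda>\<omega>. (norm (F \<omega>))\<^sup>2)" and G_sq: "integrable M (\<lambda>\<omega>. (norm (G \<omega>))\<^sup>2)"
  shows "integrable M (\<lambda>\<omega>. transpose (F \<omega>) ** G \<omega>)"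
proof (rule Bochner_Integration.integrable_bound)
  show "integrable M (\<lambda>\<omega>. (norm (F \<omega>))\<^sup>2 + (norm (G \<omega>))\<^sup>2)"
    using F_sq G_sq by simp
  have "norm (transpose X ** Y) \<le> (norm X)\<^sup>2 + (norm Y)\<^sup>2" for X Y :: "real^'n^'n"
  proof -
    have "norm (transpose X ** Y) \<le> norm X * norm Y"
      using norm_matrix_mult_le[of "transpose X" Y] by (simp add: norm_transpose)
    also have "\<dots> \<le> (norm X)\<^sup>2 + (norm Y)\<^sup>2"
      using sum_squares_bound[of "norm X" "norm Y"]
        mult_nonneg_nonneg[OF norm_ge_zero norm_ge_zero, of X Y] by linarith
    finally show ?thesis .
  qed
  then show "AE \<omega> in M.
      norm (transpose (F \<omega>) ** G \<omega>) \<le> norm ((norm (F \<omega>))\<^sup>2 + (norm (G \<omega>))\<^sup>2)"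
    by simp
qed (simp add: borel_measurable_transpose_mult)

lemma (in finite_measure) integrable_norm_sq_affine:
  fixes W :: "'a \<Rightarrow> real^'n^'n" and P Q S :: "real^'n^'n"
  assumes [measurable]: "W \<in> borel_measurable M" and W_sq: "integrable M (\<lambda>\<omega>. (norm (W \<omega>))\<^sup>2)"
  shows "integrable M (\<lambda>\<omega>. (norm (P ** W \<omega> ** Q + S))\<^sup>2)"
proof (rule Bochner_Integration.integrable_bound)
  define a where "a = norm P * norm Q"
  show "integrable M (\<lambda>\<omega>. 2 * a\<^sup>2 * (norm (W \<omega>))\<^sup>2 + 2 * (norm S)\<^sup>2)"
    using W_sq by simp
  have "(norm (P ** X ** Q + S))\<^sup>2 \<le> 2 * a\<^sup>2 * (norm X)\<^sup>2 + 2 * (norm S)\<^sup>2" for X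
  proof -
    have "norm (P ** X ** Q + S) \<le> a * norm X + norm S"
      using norm_triangle_ineq[of "P ** X ** Q" S] norm_matrix_mult_le[of "P ** X" Q]
        norm_matrix_mult_le[of P X] mult_right_mono[of "norm (P ** X)" "norm P * norm X" "norm Q"]
      by (simp add: a_def mult_ac)
    then have "(norm (P ** X ** Q + S))\<^sup>2 \<le> (a * norm X + norm S)\<^sup>2"
      by (simp add: power_mono)
    also have "\<dots> \<le> 2 * a\<^sup>2 * (norm X)\<^sup>2 + 2 * (norm S)\<^sup>2"
      using sum_squares_bound[of "a * norm X" "norm S"] by (simp add: power2_sum power_mult_distrib)
    finally show ?thesis .
  qed
  then show "AE \<omega> in M. norm ((norm (P ** W \<omega> ** Q + S))\<^sup>2)
      \<le> norm (2 * a\<^sup>2 * (norm (W \<omega>))\<^sup>2 + 2 * (norm S)\<^sup>2)"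
    by simp
  have "(\<lambda>X. (norm (P ** X ** Q + S))\<^sup>2) \<in> borel_measurable borel"
    by (intro borel_measurable_continuous_onI continuous_intros)
  then show "(\<lambda>\<omega>. (norm (P ** W \<omega> ** Q + S))\<^sup>2) \<in> borel_measurable M"
    by measurable
qed

lemma transpose_integral_outer:
  fixes b :: "'a \<Rightarrow> real^'n"
  assumes "integrable M (\<lambda>\<omega>. outer (b \<omega>))"
  shows "transpose (\<integral>\<omega>. outer (b \<omega>) \<partial>M) = (\<integral>\<omega>. outer (b \<omega>) \<partial>M)"
proof -
  have "bounded_linear (transpose :: real^'n^'n \<Rightarrow> real^'n^'n)"
    unfolding linear_conv_bounded_linear[symmetric]
    by (rule linearI) (simp_all add: transpose_def vec_eq_iff)
  then have "transpose (\<integral>\<omega>. outer (b \<omega>) \<partial>M) = (\<integral>\<omega>. transpose (outer (b \<omega>)) \<partial>M)"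
    using integral_bounded_linear[OF _ assms] by metis
  also have "\<dots> = (\<integral>\<omega>. outer (b \<omega>) \<partial>M)"
    by (simp add: outer_def transpose_def mult.commute)
  finally show ?thesis .
qed

lemma integral_nonneg_of_reflection:
  fixes X :: "'a \<Rightarrow> 'b::{real_normed_vector, second_countable_topology}" and f :: "'b \<Rightarrow> real"
  assumes [measurable]: "X \<in> borel_measurable M" "f \<in> borel_measurable borel" "S \<in> sets borel"
    and sym: "distr M borel (\<lambda>\<omega>. X \<omega> - c) = distr M borel (\<lambda>\<omega>. c - X \<omega>)"
    and in_S: "AE \<omega> in M. X \<omega> \<in> S" and int: "integrable M (\<lambda>\<omega>. f (X \<omega>))"
    and pair_nonneg: "\<And>x. x \<in> S \<Longrightarrow> c + c - x \<in> S \<Longrightarrow> 0 \<le> f x + f (c + c - x)"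
  shows "0 \<le> (\<integral>\<omega>. f (X \<omega>) \<partial>M)"
proof -
  have "distr M borel X = distr (distr M borel (\<lambda>\<omega>. X \<omega> - c)) borel (\<lambda>y. c + y)"
    by (subst distr_distr) (auto simp: comp_def)
  also have "\<dots> = distr M borel (\<lambda>\<omega>. c + c - X \<omega>)"
    unfolding sym by (subst distr_distr) (auto simp: comp_def add_diff_eq)
  finally have reflect: "distr M borel X = distr M borel (\<lambda>\<omega>. c + c - X \<omega>)" .
  have "(\<integral>\<omega>. f (c + c - X \<omega>) \<partial>M) = (\<integral>\<omega>. f (X \<omega>) \<partial>M)"
    using integral_distr[of X M borel f] integral_distr[of "\<lambda>\<omega>. c + c - X \<omega>" M borel f]
    by (simp add: reflect)
  moreover have "integrable M (\<lambda>\<omega>. f (c + c - X \<omega>))"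
    using int integrable_distr_eq[of X M borel f] integrable_distr_eq[of "\<lambda>\<omega>. c + c - X \<omega>" M borel f]
    by (simp add: reflect)
  moreover have "AE x in distr M borel X. x \<in> S"
    using in_S by (subst AE_distr_iff) auto
  then have "AE \<omega> in M. c + c - X \<omega> \<in> S"
    unfolding reflect by (subst (asm) AE_distr_iff) auto
  then have "0 \<le> (\<integral>\<omega>. f (X \<omega>) + f (c + c - X \<omega>) \<partial>M)"
    using in_S by (intro integral_nonneg_AE) (auto elim: AE_mp intro: pair_nonneg)
  ultimately show ?thesis
    using int by (simp add: Bochner_Integration.integral_add)
qed

lemma integral_quadratic_form_pos:
  fixes N :: "'a \<Rightarrow> real^'n^'n" and b :: "'a \<Rightarrow> real^'n"
  assumes inv: "AE \<omega> in M. invertible (N \<omega>)"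
    and int: "integrable M (\<lambda>\<omega>. (N \<omega> *v b \<omega>) \<bullet> (N \<omega> *v b \<omega>))"
    and outer_b: "integrable M (\<lambda>\<omega>. outer (b \<omega>))" and inv_R: "invertible (\<integral>\<omega>. outer (b \<omega>) \<partial>M)"
  shows "0 < (\<integral>\<omega>. (N \<omega> *v b \<omega>) \<bullet> (N \<omega> *v b \<omega>) \<partial>M)"
proof -
  have "(\<integral>\<omega>. (N \<omega> *v b \<omega>) \<bullet> (N \<omega> *v b \<omega>) \<partial>M) \<noteq> 0"
  proof
    assume "(\<integral>\<omega>. (N \<omega> *v b \<omega>) \<bullet> (N \<omega> *v b \<omega>) \<partial>M) = 0"
    then have "AE \<omega> in M. (N \<omega> *v b \<omega>) \<bullet> (N \<omega> *v b \<omega>) = 0"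
      using integral_nonneg_eq_0_iff_AE[OF int] by simp
    then have "AE \<omega> in M. outer (b \<omega>) = 0"
      using inv
    proof eventually_elim
      case (elim \<omega>)
      have "b \<omega> = matrix_inv (N \<omega>) *v (N \<omega> *v b \<omega>)"
        by (simp add: matrix_vector_mul_assoc matrix_inv_left[OF elim(2)])
      also have "\<dots> = 0"
        using elim(1) by simp
      finally show ?case
        by (simp add: outer_def vec_eq_iff)
    qed
    then have "(\<integral>\<omega>. outer (b \<omega>) \<partial>M) = 0"
      using integral_cong_AE[of "\<lambda>\<omega>. outer (b \<omega>)" M "\<lambda>_. 0"] outer_b by simp
    then show False
      using inv_R not_invertible_zero by metis
  qed
  moreover have "0 \<le> (\<integral>\<omega>. (N \<omega> *v b \<omega>) \<bullet> (N \<omega> *v b \<omega>) \<partial>M)"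
    by simp
  ultimately show ?thesis by linarith
qed

context prob_space
begin

text \<open>
  \<^const>\<open>indep_var\<close> requires both variables to have the same type, so independence of the
  matrix Ahat and the vector b is used only through functions of them into a common type.
\<close>

lemma indep_var_of_distr_pair:
  fixes X :: "'a \<Rightarrow> 'b::topological_space" and Y :: "'a \<Rightarrow> 'c::topological_space"
    and \<phi> :: "'b \<Rightarrow> 'd::topological_space" and \<psi> :: "'c \<Rightarrow> 'd"
  assumes [measurable]: "X \<in> borel_measurable M" "Y \<in> borel_measurable M"
    and joint: "distr M (borel \<Otimes>\<^sub>M borel) (\<lambda>\<omega>. (X \<omega>, Y \<omega>)) = distr M borel X \<Otimes>\<^sub>M distr M borel Y"
    and [measurable]: "\<phi> \<in> borel_measurable borel" "\<psi> \<in> borel_measurable borel"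
  shows "indep_var borel (\<lambda>\<omega>. \<phi> (X \<omega>)) borel (\<lambda>\<omega>. \<psi> (Y \<omega>))"
proof -
  have "sigma_finite_measure (distr (distr M borel Y) borel \<psi>)"
    by (intro prob_space_imp_sigma_finite prob_space.prob_space_distr prob_space_distr) measurable
  then have "distr (distr M borel X) borel \<phi> \<Otimes>\<^sub>M distr (distr M borel Y) borel \<psi>
      = distr (distr M borel X \<Otimes>\<^sub>M distr M borel Y) (borel \<Otimes>\<^sub>M borel) (\<lambda>(x, y). (\<phi> x, \<psi> y))"
    by (intro pair_measure_distr) measurable
  then have "distr M borel (\<lambda>\<omega>. \<phi> (X \<omega>)) \<Otimes>\<^sub>M distr M borel (\<lambda>\<omega>. \<psi> (Y \<omega>))
      = distr (distr M borel X \<Otimes>\<^sub>M distr M borel Y) (borel \<Otimes>\<^sub>M borel) (\<lambda>(x, y). (\<phi> x, \<psi> y))"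
    by (simp add: distr_distr comp_def)
  also have "\<dots> = distr M (borel \<Otimes>\<^sub>M borel) (\<lambda>\<omega>. (\<phi> (X \<omega>), \<psi> (Y \<omega>)))"
    by (simp add: joint[symmetric] distr_distr comp_def)
  finally show ?thesis
    by (simp add: indep_var_distribution_eq)
qed

lemma
  fixes X Y :: "'a \<Rightarrow> 'b::euclidean_space"
  assumes indep: "indep_var borel X borel Y" and X: "integrable M X" and Y: "integrable M Y"
  shows integrable_inner_indep: "integrable M (\<lambda>\<omega>. X \<omega> \<bullet> Y \<omega>)"
    and integral_inner_indep: "(\<integral>\<omega>. X \<omega> \<bullet> Y \<omega> \<partial>M) = (\<integral>\<omega>. X \<omega> \<partial>M) \<bullet> (\<integral>\<omega>. Y \<omega> \<partial>M)"
proof -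
  have coords: "indep_var borel (\<lambda>\<omega>. X \<omega> \<bullet> i) borel (\<lambda>\<omega>. Y \<omega> \<bullet> i)" for i :: 'b
    using indep_var_compose[OF indep, of "\<lambda>x. x \<bullet> i" borel "\<lambda>x. x \<bullet> i" borel]
    by (simp add: comp_def)
  have XY: "X \<omega> \<bullet> Y \<omega> = (\<Sum>i\<in>Basis. (X \<omega> \<bullet> i) * (Y \<omega> \<bullet> i))" for \<omega>
    by (rule euclidean_inner)
  have int_coords: "integrable M (\<lambda>\<omega>. (X \<omega> \<bullet> i) * (Y \<omega> \<bullet> i))" for i
    by (rule indep_var_integrable[OF coords]) (use X Y in auto)
  show "integrable M (\<lambda>\<omega>. X \<omega> \<bullet> Y \<omega>)"
    unfolding XY by (intro Bochner_Integration.integrable_sum int_coords)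
  have "(\<integral>\<omega>. X \<omega> \<bullet> Y \<omega> \<partial>M) = (\<Sum>i\<in>Basis. \<integral>\<omega>. (X \<omega> \<bullet> i) * (Y \<omega> \<bullet> i) \<partial>M)"
    unfolding XY by (intro Bochner_Integration.integral_sum int_coords)
  also have "\<dots> = (\<Sum>i\<in>Basis. ((\<integral>\<omega>. X \<omega> \<partial>M) \<bullet> i) * ((\<integral>\<omega>. Y \<omega> \<partial>M) \<bullet> i))"
    by (intro sum.cong refl)
      (simp add: indep_var_lebesgue_integral[OF coords] X Y)
  also have "\<dots> = (\<integral>\<omega>. X \<omega> \<partial>M) \<bullet> (\<integral>\<omega>. Y \<omega> \<partial>M)"
    by (rule euclidean_inner[symmetric])
  finally show "(\<integral>\<omega>. X \<omega> \<bullet> Y \<omega> \<partial>M) = (\<integral>\<omega>. X \<omega> \<partial>M) \<bullet> (\<integral>\<omega>. Y \<omega> \<partial>M)" .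
qed

lemma
  fixes Z :: "'a \<Rightarrow> 'z::topological_space" and f g :: "'z \<Rightarrow> real^'n^'n" and b :: "'a \<Rightarrow> real^'n"
  assumes [measurable]: "Z \<in> borel_measurable M" "b \<in> borel_measurable M"
    and joint: "distr M (borel \<Otimes>\<^sub>M borel) (\<lambda>\<omega>. (Z \<omega>, b \<omega>)) = distr M borel Z \<Otimes>\<^sub>M distr M borel b"
    and [measurable]: "f \<in> borel_measurable borel" "g \<in> borel_measurable borel"
    and f_sq: "integrable M (\<lambda>\<omega>. (norm (f (Z \<omega>)))\<^sup>2)" and g_sq: "integrable M (\<lambda>\<omega>. (norm (g (Z \<omega>)))\<^sup>2)"
    and outer_b: "integrable M (\<lambda>\<omega>. outer (b \<omega>))"
  shows integrable_quadratic_form_indep: "integrable M (\<lambda>\<omega>. (f (Z \<omega>) *v b \<omega>) \<bullet> (g (Z \<omega>) *v b \<omega>))"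
    and integral_quadratic_form_indep: "(\<integral>\<omega>. (f (Z \<omega>) *v b \<omega>) \<bullet> (g (Z \<omega>) *v b \<omega>) \<partial>M)
      = (\<integral>\<omega>. (transpose (f (Z \<omega>)) ** g (Z \<omega>)) \<bullet> (\<integral>\<omega>. outer (b \<omega>) \<partial>M) \<partial>M)"
proof -
  have "indep_var borel (\<lambda>\<omega>. transpose (f (Z \<omega>)) ** g (Z \<omega>)) borel (\<lambda>\<omega>. outer (b \<omega>))"
    using borel_measurable_transpose_mult[of f borel g]
    by (intro indep_var_of_distr_pair[OF _ _ joint]) (simp_all add: borel_measurable_outer)
  moreover have "integrable M (\<lambda>\<omega>. transpose (f (Z \<omega>)) ** g (Z \<omega>))"
    by (rule integrable_transpose_mult[OF _ _ f_sq g_sq]) simp_all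
  ultimately show "integrable M (\<lambda>\<omega>. (f (Z \<omega>) *v b \<omega>) \<bullet> (g (Z \<omega>) *v b \<omega>))"
    and "(\<integral>\<omega>. (f (Z \<omega>) *v b \<omega>) \<bullet> (g (Z \<omega>) *v b \<omega>) \<partial>M)
      = (\<integral>\<omega>. (transpose (f (Z \<omega>)) ** g (Z \<omega>)) \<bullet> (\<integral>\<omega>. outer (b \<omega>) \<partial>M) \<partial>M)"
    using integrable_inner_indep integral_inner_indep outer_b
    by (simp_all add: inner_matrix_vector_mult_eq_outer)
qed

end

locale aug_inverse_setting = prob_space M for M :: "'a measure" +
  fixes A :: "real^'n^'n" and Ahat :: "'a \<Rightarrow> real^'n^'n"
    and b :: "'a \<Rightarrow> real^'n" and R :: "real^'n^'n"
  assumes invertible_A: "invertible A"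
    and measurable_Ahat [measurable]: "Ahat \<in> borel_measurable M"
    and invertible_Ahat: "AE \<omega> in M. invertible (Ahat \<omega>)"
    and integrable_inv_Ahat_sq: "integrable M (\<lambda>\<omega>. (norm (matrix_inv (Ahat \<omega>)))\<^sup>2)"
    and measurable_b [measurable]: "b \<in> borel_measurable M"
    and joint_Ahat_b: "distr M (borel \<Otimes>\<^sub>M borel) (\<lambda>\<omega>. (Ahat \<omega>, b \<omega>))
      = distr M borel Ahat \<Otimes>\<^sub>M distr M borel b"
    and integrable_outer_b: "integrable M (\<lambda>\<omega>. outer (b \<omega>))"
    and R_eq: "R = (\<integral>\<omega>. outer (b \<omega>) \<partial>M)"
    and invertible_R: "invertible R"
begin

text \<open>
  A (Ahat^-1 - A^-1) b - \<beta> A K b is the residual whose squared norm is averaged in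
  \<^const>\<open>resid_err\<close>; \<open>inv_error\<close> and \<open>aug_term\<close> are its two matrices.
\<close>

definition inv_error :: "real^'n^'n \<Rightarrow> real^'n^'n" where
  "inv_error X = A ** matrix_inv X - mat 1"

definition aug_term :: "real^'n^'n \<Rightarrow> real^'n^'n" where
  "aug_term X = A ** matrix_inv X ** matrix_inv R"

definition cross_coeff :: real where
  "cross_coeff = (\<integral>\<omega>. (inv_error (Ahat \<omega>) *v b \<omega>) \<bullet> (aug_term (Ahat \<omega>) *v b \<omega>) \<partial>M)"

definition quad_coeff :: real where
  "quad_coeff = (\<integral>\<omega>. (aug_term (Ahat \<omega>) *v b \<omega>) \<bullet> (aug_term (Ahat \<omega>) *v b \<omega>) \<partial>M)"

lemma borel_measurable_inv_error_aug_term [measurable]: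
  "inv_error \<in> borel_measurable borel" "aug_term \<in> borel_measurable borel"
proof -
  have "(\<lambda>Y. A ** Y - mat 1) \<in> borel_measurable borel"
    and "(\<lambda>Y. A ** Y ** matrix_inv R) \<in> borel_measurable borel"
    by (intro borel_measurable_continuous_onI continuous_intros)+
  then show "inv_error \<in> borel_measurable borel" "aug_term \<in> borel_measurable borel"
    unfolding inv_error_def[abs_def] aug_term_def[abs_def] by measurable
qed

lemma integrable_inv_error_aug_term_sq:
  "integrable M (\<lambda>\<omega>. (norm (inv_error (Ahat \<omega>)))\<^sup>2)"
  "integrable M (\<lambda>\<omega>. (norm (aug_term (Ahat \<omega>)))\<^sup>2)"
  using integrable_norm_sq_affine[OF _ integrable_inv_Ahat_sq, of A "mat 1" "- mat 1"]
    integrable_norm_sq_affine[OF _ integrable_inv_Ahat_sq, of A "matrix_inv R" 0]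
  by (simp_all add: inv_error_def aug_term_def)

lemma integrable_residual_form:
  assumes "f \<in> {inv_error, aug_term}" and "g \<in> {inv_error, aug_term}"
  shows "integrable M (\<lambda>\<omega>. (f (Ahat \<omega>) *v b \<omega>) \<bullet> (g (Ahat \<omega>) *v b \<omega>))"
  using assms integrable_inv_error_aug_term_sq
  by (auto intro!: integrable_quadratic_form_indep[OF _ _ joint_Ahat_b _ _ _ _ integrable_outer_b])

lemma resid_err_quadratic:
  "resid_err M A Ahat b R \<beta> = resid_err M A Ahat b R 0 - 2 * \<beta> * cross_coeff + \<beta>\<^sup>2 * quad_coeff"
proof -
  have "resid_err M A Ahat b R \<beta> =
      (\<integral>\<omega>. (inv_error (Ahat \<omega>) *v b \<omega>) \<bullet> (inv_error (Ahat \<omega>) *v b \<omega>)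
      - 2 * \<beta> * ((inv_error (Ahat \<omega>) *v b \<omega>) \<bullet> (aug_term (Ahat \<omega>) *v b \<omega>))
      + \<beta>\<^sup>2 * ((aug_term (Ahat \<omega>) *v b \<omega>) \<bullet> (aug_term (Ahat \<omega>) *v b \<omega>)) \<partial>M)" for \<beta>
    unfolding resid_err_def wnorm2_aug_inv_expand[OF invertible_A] inv_error_def aug_term_def ..
  then show ?thesis
    using integrable_residual_form by (simp add: cross_coeff_def quad_coeff_def)
qed

lemma cross_term_eq: "cross_term A X = (transpose (inv_error X) ** aug_term X) \<bullet> R"
  unfolding cross_term_def inv_error_def aug_term_def
  using inner_transpose_mult_symmetric[OF invertible_R]
    transpose_integral_outer[OF integrable_outer_b]
  by (simp add: R_eq)

lemma cross_coeff_eq: "cross_coeff = (\<integral>\<omega>. cross_term A (Ahat \<omega>) \<partial>M)"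
  unfolding cross_coeff_def cross_term_eq
  by (rule integral_quadratic_form_indep[OF measurable_Ahat measurable_b joint_Ahat_b
        borel_measurable_inv_error_aug_term integrable_inv_error_aug_term_sq integrable_outer_b,
        folded R_eq])

lemma cross_coeff_nonneg:
  assumes sym: "distr M borel (\<lambda>\<omega>. Ahat \<omega> - A) = distr M borel (\<lambda>\<omega>. A - Ahat \<omega>)"
  shows "0 \<le> cross_coeff"
  unfolding cross_coeff_eq
proof (rule integral_nonneg_of_reflection[OF measurable_Ahat _ _ sym
      invertible_Ahat[folded mem_Collect_eq[of _ invertible]]])
  show "cross_term A \<in> borel_measurable borel"
    unfolding cross_term_eq[abs_def]
    by (intro borel_measurable_inner borel_measurable_transpose_mult
        borel_measurable_inv_error_aug_term borel_measurable_const)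
  show "{X::real^'n^'n. invertible X} \<in> sets borel"
    by (rule borel_open[OF open_invertible])
  show "integrable M (\<lambda>\<omega>. cross_term A (Ahat \<omega>))"
    unfolding cross_term_eq
    using integrable_transpose_mult[OF _ _ integrable_inv_error_aug_term_sq] by simp
  show "0 \<le> cross_term A X + cross_term A (A + A - X)"
    if "X \<in> {X. invertible X}" and "A + A - X \<in> {X. invertible X}" for X
    using that by (intro cross_term_reflect_nonneg[OF invertible_A]) (auto simp: scaleR_2)
qed

lemma quad_coeff_pos: "0 < quad_coeff"
  unfolding quad_coeff_def
proof (rule integral_quadratic_form_pos)
  show "AE \<omega> in M. invertible (aug_term (Ahat \<omega>))"
    using invertible_Ahat
    by eventually_elim
      (simp add: aug_term_def invertible_mult invertible_A invertible_matrix_inv invertible_R)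
qed (use integrable_residual_form integrable_outer_b invertible_R R_eq in auto)

end

theorem theorem7p1:
  fixes M :: "'a measure"
    and A :: "real^'n^'n"
    and Ahat :: "'a \<Rightarrow> real^'n^'n"
    and b :: "'a \<Rightarrow> real^'n"
    and R :: "real^'n^'n"
  assumes "prob_space M"
    and "invertible A"
    and "Ahat \<in> borel_measurable M"
    and "AE \<omega> in M. invertible (Ahat \<omega>)"
    and "integrable M (\<lambda>\<omega>. (norm (matrix_inv (Ahat \<omega>)))\<^sup>2)"
    and "distr M borel (\<lambda>\<omega>. Ahat \<omega> - A) = distr M borel (\<lambda>\<omega>. A - Ahat \<omega>)"
    and "integrable M Ahat"
    and "(\<integral>\<omega>. Ahat \<omega> \<partial>M) = A"
    and "b \<in> borel_measurable M"
    and "distr M (borel \<Otimes>\<^sub>M borel) (\<lambda>\<omega>. (Ahat \<omega>, b \<omega>))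
           = distr M borel Ahat \<Otimes>\<^sub>M distr M borel b"
    and "integrable M (\<lambda>\<omega>. outer (b \<omega>))"
    and "R = (\<integral>\<omega>. outer (b \<omega>) \<partial>M)"
    and "invertible R"
  shows "\<exists>\<beta>s. (\<forall>\<beta>. resid_err M A Ahat b R \<beta>s \<le> resid_err M A Ahat b R \<beta>)
            \<and> (\<forall>\<beta>s'. (\<forall>\<beta>. resid_err M A Ahat b R \<beta>s' \<le> resid_err M A Ahat b R \<beta>) \<longrightarrow> 0 \<le> \<beta>s')"
proof -
  interpret aug_inverse_setting M A Ahat b R
    by (intro aug_inverse_setting.intro aug_inverse_setting_axioms.intro) (fact assms)+
  show ?thesis
    by (rule quadratic_minimizers_nonneg[OF resid_err_quadratic quad_coeff_pos
          cross_coeff_nonneg[OF assms(6)]])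
qed

end
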